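(* Let $0<\lambda\le\lambda_0$. Let $\boldsymbol\alpha_0^\star$ be the optimal solution of $\max_{\boldsymbol\alpha\ge\mathbf0}D_{\lambda_0}(\boldsymbol\alpha)$, and let $\boldsymbol\alpha_0\in\mathbb R^{2nK}$ and $\epsilon\ge0$ satisfy $\|\boldsymbol\alpha_0-\boldsymbol\alpha_0^\star\|_2\le\epsilon$. Let $\mathbf m^\star$ be the optimal solution of $\min_{\mathbf m\ge\mathbf0}P_\lambda(\mathbf m)$. For $k\in[p]$ define $$\lambda_a=\frac{\lambda_0\big(2\epsilon\|\mathbf C_{k,:}\|_2+\|\boldsymbol\alpha_0\|_2\|\mathbf C_{k,:}\|_2+\mathbf C_{k,:}\boldsymbol\alpha_0\big)}{2\lambda_0+\|\boldsymbol\alpha_0\|_2\|\mathbf C_{k,:}\|_2-\mathbf C_{k,:}\boldsymbol\alpha_0}.$$ If $\lambda_a\le\lambda\le\lambda_0$, then $m^\star_k=0$.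
   Context: Let $n,K,p\ge1$ be integers, $[n]=\{1,\dots,n\}$. For each $i\in[n]$ let $\mathbf x_i\in\mathbb R^p$ have nonnegative entries and let $\mathcal D_i,\mathcal S_i\subseteq[n]$ be sets of size $K$. Put $\mathbf c_{ij}=(\mathbf x_i-\mathbf x_j)\circ(\mathbf x_i-\mathbf x_j)$ (entrywise product). Vectors in $\mathbb R^{2nK}$ are indexed by the pairs $(i,l)$, $l\in\mathcal D_i$ ("different-class pairs") and $(i,j)$, $j\in\mathcal S_i$ ("same-class pairs"). $\mathbf C\in\mathbb R^{p\times2nK}$ has column $\mathbf c_{il}$ for each different-class pair and $-\mathbf c_{ij}$ for each same-class pair; $\mathbf C_{k,:}$ is its $k$-th row. Fix $L\ge U\ge0$, $\eta>0$; let $\mathbf t\in\mathbb R^{2nK}$ have entry $L$ at different-class pairs and $-U$ at same-class pairs; $\ell_s(x)=([s-x]_+)^2$ with $[z]_+=\max\{z,0\}$ (entrywise for vectors); $\mathbf1$ is the all-ones vector. For $\lambda>0$, $$P_\lambda(\mathbf m)=\sum_{i\in[n]}\Big[\sum_{l\in\mathcal D_i}\ell_L(\mathbf m^\top\mathbf c_{il})+\sum_{j\in\mathcal S_i}\ell_{-U}(-\mathbf m^\top\mathbf c_{ij})\Big]+\lambda\Big(\mathbf m^\top\mathbf1+\frac\eta2\|\mathbf m\|_2^2\Big)\ (\mathbf m\in\mathbb R^p_{\ge0}),$$ $$D_\lambda(\boldsymbol\alpha)=-\frac14\|\boldsymbol\alpha\|_2^2+\mathbf t^\top\boldsymbol\alpha-\frac{\lambda\eta}2\Big\|\frac1{\lambda\eta}[\mathbf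 C\boldsymbol\alpha-\lambda\mathbf1]_+\Big\|_2^2\ (\boldsymbol\alpha\in\mathbb R^{2nK}_{\ge0}).$$ *)

theory Defs
  imports "HOL-Analysis.Analysis"
begin

text \<open>Data: x i k is the k-th entry of x_i (i in {1..n}, k in {1..p}).
  Dm i = D_i (different-class neighbours), Sm i = S_i (same-class neighbours).
  Coordinates of R^{2nK} are tagged pairs: (True,i,l) for l in D_i and
  (False,i,j) for j in S_i.\<close>

definition pair_idx :: "nat \<Rightarrow> (nat \<Rightarrow> nat set) \<Rightarrow> (nat \<Rightarrow> nat set) \<Rightarrow> (bool \<times> nat \<times> nat) set" where
  "pair_idx n Dm Sm = {(True, i, l) | i l. i \<in> {1..n} \<and> l \<in> Dm i}
                    \<union> {(False, i, j) | i j. i \<in> {1..n} \<and> j \<in> Sm i}"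

definition cvec :: "(nat \<Rightarrow> nat \<Rightarrow> real) \<Rightarrow> nat \<Rightarrow> nat \<Rightarrow> nat \<Rightarrow> real" where
  "cvec x i j k = (x i k - x j k) * (x i k - x j k)"

definition Cmat :: "(nat \<Rightarrow> nat \<Rightarrow> real) \<Rightarrow> nat \<Rightarrow> bool \<times> nat \<times> nat \<Rightarrow> real" where
  "Cmat x k q = (case q of (b, i, j) \<Rightarrow> if b then cvec x i j k else - cvec x i j k)"

definition tvec :: "real \<Rightarrow> real \<Rightarrow> bool \<times> nat \<times> nat \<Rightarrow> real" where
  "tvec L U q = (if fst q then L else - U)"

definition pos_part :: "real \<Rightarrow> real" where
  "pos_part z = max z 0"

definition sq_hinge :: "real \<Rightarrow> real \<Rightarrow> real" where
  "sq_hinge s z = (pos_part (s - z))\<^sup>2"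

definition primal_obj ::
  "nat \<Rightarrow> nat \<Rightarrow> (nat \<Rightarrow> nat \<Rightarrow> real) \<Rightarrow> (nat \<Rightarrow> nat set) \<Rightarrow> (nat \<Rightarrow> nat set)
    \<Rightarrow> real \<Rightarrow> real \<Rightarrow> real \<Rightarrow> real \<Rightarrow> (nat \<Rightarrow> real) \<Rightarrow> real" where
  "primal_obj n p x Dm Sm L U eta lam m =
     (\<Sum>i\<in>{1..n}. (\<Sum>l\<in>Dm i. sq_hinge L (\<Sum>k\<in>{1..p}. m k * cvec x i l k))
                 + (\<Sum>j\<in>Sm i. sq_hinge (- U) (- (\<Sum>k\<in>{1..p}. m k * cvec x i j k))))
     + lam * ((\<Sum>k\<in>{1..p}. m k) + eta / 2 * (\<Sum>k\<in>{1..p}. (m k)\<^sup>2))"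

definition primal_feasible :: "nat \<Rightarrow> (nat \<Rightarrow> real) \<Rightarrow> bool" where
  "primal_feasible p m \<longleftrightarrow> (\<forall>k\<in>{1..p}. m k \<ge> 0) \<and> (\<forall>k. k \<notin> {1..p} \<longrightarrow> m k = 0)"

definition dual_obj ::
  "nat \<Rightarrow> nat \<Rightarrow> (nat \<Rightarrow> nat \<Rightarrow> real) \<Rightarrow> (nat \<Rightarrow> nat set) \<Rightarrow> (nat \<Rightarrow> nat set)
    \<Rightarrow> real \<Rightarrow> real \<Rightarrow> real \<Rightarrow> real \<Rightarrow> (bool \<times> nat \<times> nat \<Rightarrow> real) \<Rightarrow> real" where
  "dual_obj n p x Dm Sm L U eta lam a =
     (let I = pair_idx n Dm Sm in
       - 1/4 * (\<Sum>q\<in>I. (a q)\<^sup>2) + (\<Sum>q\<in>I. tvec L U q * a q)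
       - lam * eta / 2 *
         (\<Sum>k\<in>{1..p}. ((1 / (lam * eta)) * pos_part ((\<Sum>q\<in>I. Cmat x k q * a q) - lam))\<^sup>2))"

definition dual_feasible :: "nat \<Rightarrow> (nat \<Rightarrow> nat set) \<Rightarrow> (nat \<Rightarrow> nat set) \<Rightarrow> (bool \<times> nat \<times> nat \<Rightarrow> real) \<Rightarrow> bool" where
  "dual_feasible n Dm Sm a \<longleftrightarrow>
     (\<forall>q\<in>pair_idx n Dm Sm. a q \<ge> 0) \<and> (\<forall>q. q \<notin> pair_idx n Dm Sm \<longrightarrow> a q = 0)"

definition vnorm :: "(bool \<times> nat \<times> nat) set \<Rightarrow> (bool \<times> nat \<times> nat \<Rightarrow> real) \<Rightarrow> real" where
  "vnorm I a = sqrt (\<Sum>q\<in>I. (a q)\<^sup>2)"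

end

theory Submission
  imports Defs
begin

(* Both objectives are smooth and convex (resp. concave) on nonnegative orthants, so their optima
  are characterised by first-order variational inequalities, obtained by moving the optimum a
  little towards another feasible point. Let s = lam / lam0, let alpha = 2 [t - C^T m*]_+ be the
  dual point of the primal optimum m* at lam, and let A be the dual optimum at lam0. Testing the
  dual inequality at alpha / s and the primal inequality at the primal point
  [C A - lam0]_+ / (lam0 eta) of A, and adding complementarity of the squared hinge, gives
  <alpha - s A, alpha - A> <= 0: alpha lies in the ball with centre (1 + s) / 2 A and radius
  (1 - s) / 2 |A|. Over this ball, with A replaced by its eps-approximation a0, Cauchy-Schwarz
  gives C_k alpha <= lam as soon as lam >= lam_a, and the primal inequality at m* with its k-th
  entry set to 0 then forces m*_k = 0. *)

lemma pos_part_sq_add_le: "(pos_part (z + d))\<^sup>2 \<le> (pos_part z)\<^sup>2 + 2 * pos_part z * d + d\<^sup>2"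
proof (cases "0 \<le> z")
  case False
  then have "(pos_part (z + d))\<^sup>2 \<le> d\<^sup>2"
    by (cases "0 \<le> z + d") (auto simp: pos_part_def abs_le_square_iff[symmetric])
  with False show ?thesis by (simp add: pos_part_def)
next
  case True
  then have "(pos_part z)\<^sup>2 + 2 * pos_part z * d + d\<^sup>2 = (z + d)\<^sup>2"
    by (simp add: pos_part_def power2_sum)
  then show ?thesis by (simp add: pos_part_def max_def)
qed

lemma nonneg_of_perturbation:
  fixes G M :: real
  assumes "\<And>\<theta>. 0 < \<theta> \<Longrightarrow> \<theta> \<le> 1 \<Longrightarrow> 0 \<le> \<theta> * G + \<theta>\<^sup>2 * M"
  shows "0 \<le> G"
proof (rule tendsto_lowerbound)
  show "((\<lambda>\<theta>. G + \<theta> * M) \<longlongrightarrow> G) (at_right 0)"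
    by (auto intro!: tendsto_eq_intros)
  have "0 \<le> G + \<theta> * M" if "0 < \<theta>" "\<theta> < 1" for \<theta>
  proof -
    have "0 \<le> \<theta> * (G + \<theta> * M)"
      using assms[of \<theta>] that by (simp add: power2_eq_square algebra_simps)
    with \<open>0 < \<theta>\<close> show ?thesis by (simp add: zero_le_mult_iff)
  qed
  then show "\<forall>\<^sub>F \<theta> in at_right 0. 0 \<le> G + \<theta> * M"
    unfolding eventually_at_right_field by (intro exI[of _ 1]) auto
qed simp

lemma sum_mult_le_L2_set: "(\<Sum>i\<in>A. f i * g i) \<le> L2_set f A * L2_set g A"
proof -
  have "(\<Sum>i\<in>A. f i * g i) \<le> (\<Sum>i\<in>A. \<bar>f i\<bar> * \<bar>g i\<bar>)"
    by (rule sum_mono) (simp flip: abs_mult)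
  also have "\<dots> \<le> L2_set f A * L2_set g A"
    by (rule L2_set_mult_ineq)
  finally show ?thesis .
qed

lemma sum_mult_le_of_ball:
  assumes ball: "L2_set (\<lambda>i. u i - c * b i) A \<le> r * L2_set b A"
    and approx: "L2_set (\<lambda>i. b0 i - b i) A \<le> eps"
    and "0 \<le> c" "0 \<le> r"
  shows "(\<Sum>i\<in>A. w i * u i)
    \<le> c * ((\<Sum>i\<in>A. w i * b0 i) + L2_set w A * eps) + r * L2_set w A * (L2_set b0 A + eps)"
proof -
  have approx': "L2_set (\<lambda>i. b i - b0 i) A \<le> eps"
    using approx by (simp add: L2_set_def power2_commute)
  have "(\<Sum>i\<in>A. w i * b i) = (\<Sum>i\<in>A. w i * b0 i) + (\<Sum>i\<in>A. w i * (b i - b0 i))"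
    by (simp add: algebra_simps sum_subtractf)
  also have "\<dots> \<le> (\<Sum>i\<in>A. w i * b0 i) + L2_set w A * eps"
    using order.trans[OF sum_mult_le_L2_set mult_left_mono[OF approx' L2_set_nonneg]] by simp
  finally have center: "(\<Sum>i\<in>A. w i * b i) \<le> (\<Sum>i\<in>A. w i * b0 i) + L2_set w A * eps" .
  have "L2_set b A \<le> L2_set b0 A + L2_set (\<lambda>i. b i - b0 i) A"
    using L2_set_triangle_ineq[of b0 "\<lambda>i. b i - b0 i" A] by simp
  with approx' have "L2_set b A \<le> L2_set b0 A + eps"
    by linarith
  with ball \<open>0 \<le> r\<close> have "L2_set (\<lambda>i. u i - c * b i) A \<le> r * (L2_set b0 A + eps)"
    by (meson mult_left_mono order.trans)
  then have "L2_set w A * L2_set (\<lambda>i. u i - c * b i) A \<le> L2_set w A * (r * (L2_set b0 A + eps))"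
    by (simp add: mult_left_mono)
  with sum_mult_le_L2_set[of w "\<lambda>i. u i - c * b i" A]
  have radius: "(\<Sum>i\<in>A. w i * (u i - c * b i)) \<le> r * L2_set w A * (L2_set b0 A + eps)"
    by (simp add: ac_simps)
  have "(\<Sum>i\<in>A. w i * u i) = c * (\<Sum>i\<in>A. w i * b i) + (\<Sum>i\<in>A. w i * (u i - c * b i))"
    by (simp add: algebra_simps sum_subtractf sum_distrib_left)
  with mult_left_mono[OF center \<open>0 \<le> c\<close>] radius show ?thesis
    by linarith
qed

lemma screening_threshold:
  fixes lam lam0 eps nw nb0 wb0 :: real
  assumes "0 < lam0" "wb0 \<le> nb0 * nw"
    and "lam0 * (2 * eps * nw + nb0 * nw + wb0) / (2 * lam0 + nb0 * nw - wb0) \<le> lam"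
  shows "(1 + lam / lam0) / 2 * (wb0 + nw * eps) + (1 - lam / lam0) / 2 * nw * (nb0 + eps) \<le> lam"
proof -
  have "0 < 2 * lam0 + nb0 * nw - wb0"
    using assms by linarith
  with assms have "lam0 * (2 * eps * nw + nb0 * nw + wb0) + lam * (wb0 - nb0 * nw) \<le> lam * (2 * lam0)"
    by (simp add: pos_divide_le_eq algebra_simps)
  moreover have "(1 + lam / lam0) / 2 * (wb0 + nw * eps) + (1 - lam / lam0) / 2 * nw * (nb0 + eps)
      = (lam0 * (2 * eps * nw + nb0 * nw + wb0) + lam * (wb0 - nb0 * nw)) / (2 * lam0)"
    using \<open>0 < lam0\<close> by (simp add: field_simps)
  ultimately show ?thesis
    using \<open>0 < lam0\<close> by (simp add: pos_divide_le_eq)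
qed

definition nonneg_vecs :: "'a set \<Rightarrow> ('a \<Rightarrow> real) set" where
  "nonneg_vecs A = {v. (\<forall>a\<in>A. 0 \<le> v a) \<and> (\<forall>a. a \<notin> A \<longrightarrow> v a = 0)}"

lemma nonneg_vecs_segment:
  assumes "v \<in> nonneg_vecs A" "w \<in> nonneg_vecs A" "0 \<le> \<theta>" "\<theta> \<le> 1"
  shows "(\<lambda>a. v a + \<theta> * (w a - v a)) \<in> nonneg_vecs A"
proof -
  have "v a + \<theta> * (w a - v a) = (1 - \<theta>) * v a + \<theta> * w a" for a
    by (simp add: algebra_simps)
  with assms show ?thesis
    unfolding nonneg_vecs_def by auto
qed

locale sparse_metric_learning =
  fixes I :: "'q set" and P :: "'k set" and C :: "'k \<Rightarrow> 'q \<Rightarrow> real"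
    and t :: "'q \<Rightarrow> real" and eta :: real
  assumes finite_P: "finite P" and eta_pos: "0 < eta"
begin

abbreviation Cmul :: "('q \<Rightarrow> real) \<Rightarrow> 'k \<Rightarrow> real" where
  "Cmul a k \<equiv> \<Sum>q\<in>I. C k q * a q"

abbreviation CTmul :: "('k \<Rightarrow> real) \<Rightarrow> 'q \<Rightarrow> real" where
  "CTmul m q \<equiv> \<Sum>k\<in>P. m k * C k q"

definition primal :: "real \<Rightarrow> ('k \<Rightarrow> real) \<Rightarrow> real" where
  "primal lam m = (\<Sum>q\<in>I. (pos_part (t q - CTmul m q))\<^sup>2)
     + lam * ((\<Sum>k\<in>P. m k) + eta / 2 * (\<Sum>k\<in>P. (m k)\<^sup>2))"

definition dual :: "real \<Rightarrow> ('q \<Rightarrow> real) \<Rightarrow> real" where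
  "dual lam a = - 1/4 * (\<Sum>q\<in>I. (a q)\<^sup>2) + (\<Sum>q\<in>I. t q * a q)
     - 1 / (2 * lam * eta) * (\<Sum>k\<in>P. (pos_part (Cmul a k - lam))\<^sup>2)"

(* The KKT maps between primal and dual points. *)
definition alpha_of :: "('k \<Rightarrow> real) \<Rightarrow> 'q \<Rightarrow> real" where
  "alpha_of m q = (if q \<in> I then 2 * pos_part (t q - CTmul m q) else 0)"

definition m_of :: "real \<Rightarrow> ('q \<Rightarrow> real) \<Rightarrow> 'k \<Rightarrow> real" where
  "m_of lam a k = (if k \<in> P then pos_part (Cmul a k - lam) / (lam * eta) else 0)"

definition primal_grad :: "real \<Rightarrow> ('k \<Rightarrow> real) \<Rightarrow> 'k \<Rightarrow> real" where
  "primal_grad lam m k = lam + lam * eta * m k - Cmul (alpha_of m) k"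

definition dual_grad :: "real \<Rightarrow> ('q \<Rightarrow> real) \<Rightarrow> 'q \<Rightarrow> real" where
  "dual_grad lam a q = t q - a q / 2 - CTmul (m_of lam a) q"

lemma sum_mult_CTmul: "(\<Sum>q\<in>I. a q * CTmul m q) = (\<Sum>k\<in>P. m k * Cmul a k)"
  by (simp add: sum_distrib_left sum.swap[of _ I] ac_simps)

lemma primal_perturb_le:
  "primal lam (\<lambda>k. m k + \<theta> * d k) \<le> primal lam m + \<theta> * (\<Sum>k\<in>P. d k * primal_grad lam m k)
     + \<theta>\<^sup>2 * ((\<Sum>q\<in>I. (CTmul d q)\<^sup>2) + lam * eta / 2 * (\<Sum>k\<in>P. (d k)\<^sup>2))"
proof -
  let ?r = "\<lambda>q. pos_part (t q - CTmul m q)"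
  have "(pos_part (t q - CTmul (\<lambda>k. m k + \<theta> * d k) q))\<^sup>2
      \<le> (?r q)\<^sup>2 - \<theta> * (2 * ?r q * CTmul d q) + \<theta>\<^sup>2 * (CTmul d q)\<^sup>2" for q
  proof -
    have "CTmul (\<lambda>k. m k + \<theta> * d k) q = CTmul m q + \<theta> * CTmul d q"
      by (simp add: distrib_right sum.distrib sum_distrib_left mult.assoc)
    then have "t q - CTmul (\<lambda>k. m k + \<theta> * d k) q = (t q - CTmul m q) + - \<theta> * CTmul d q"
      by simp
    then show ?thesis
      using pos_part_sq_add_le[of "t q - CTmul m q" "- \<theta> * CTmul d q"]
      by (simp add: power_mult_distrib algebra_simps)
  qed
  then have "(\<Sum>q\<in>I. (pos_part (t q - CTmul (\<lambda>k. m k + \<theta> * d k) q))\<^sup>2)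
      \<le> (\<Sum>q\<in>I. (?r q)\<^sup>2 - \<theta> * (2 * ?r q * CTmul d q) + \<theta>\<^sup>2 * (CTmul d q)\<^sup>2)"
    by (rule sum_mono)
  also have "\<dots> = (\<Sum>q\<in>I. (?r q)\<^sup>2) - \<theta> * (\<Sum>q\<in>I. alpha_of m q * CTmul d q)
      + \<theta>\<^sup>2 * (\<Sum>q\<in>I. (CTmul d q)\<^sup>2)"
    by (simp add: sum.distrib sum_subtractf sum_distrib_left alpha_of_def mult.assoc)
  also have "(\<Sum>q\<in>I. alpha_of m q * CTmul d q) = (\<Sum>k\<in>P. d k * Cmul (alpha_of m) k)"
    by (rule sum_mult_CTmul)
  finally have loss: "(\<Sum>q\<in>I. (pos_part (t q - CTmul (\<lambda>k. m k + \<theta> * d k) q))\<^sup>2)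
      \<le> (\<Sum>q\<in>I. (?r q)\<^sup>2) - \<theta> * (\<Sum>k\<in>P. d k * Cmul (alpha_of m) k)
         + \<theta>\<^sup>2 * (\<Sum>q\<in>I. (CTmul d q)\<^sup>2)" .
  have "(\<Sum>k\<in>P. (m k + \<theta> * d k)\<^sup>2)
      = (\<Sum>k\<in>P. (m k)\<^sup>2) + \<theta> * (2 * (\<Sum>k\<in>P. m k * d k)) + \<theta>\<^sup>2 * (\<Sum>k\<in>P. (d k)\<^sup>2)"
    by (simp add: power2_sum power_mult_distrib sum.distrib sum_distrib_left algebra_simps)
  with loss show ?thesis
    unfolding primal_def primal_grad_def
    by (simp add: sum.distrib sum_subtractf sum_distrib_left algebra_simps)
qed

lemma dual_perturb_ge:
  assumes "0 < lam"
  shows "dual lam a + \<theta> * (\<Sum>q\<in>I. d q * dual_grad lam a q)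
      - \<theta>\<^sup>2 * (1/4 * (\<Sum>q\<in>I. (d q)\<^sup>2) + 1 / (2 * lam * eta) * (\<Sum>k\<in>P. (Cmul d k)\<^sup>2))
    \<le> dual lam (\<lambda>q. a q + \<theta> * d q)"
proof -
  let ?r = "\<lambda>k. pos_part (Cmul a k - lam)"
  have "(pos_part (Cmul (\<lambda>q. a q + \<theta> * d q) k - lam))\<^sup>2
      \<le> (?r k)\<^sup>2 + \<theta> * (2 * ?r k * Cmul d k) + \<theta>\<^sup>2 * (Cmul d k)\<^sup>2" for k
  proof -
    have "Cmul (\<lambda>q. a q + \<theta> * d q) k - lam = (Cmul a k - lam) + \<theta> * Cmul d k"
      by (simp add: distrib_left sum.distrib sum_distrib_left mult.left_commute)
    then show ?thesis
      using pos_part_sq_add_le[of "Cmul a k - lam" "\<theta> * Cmul d k"]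
      by (simp add: power_mult_distrib algebra_simps)
  qed
  then have "(\<Sum>k\<in>P. (pos_part (Cmul (\<lambda>q. a q + \<theta> * d q) k - lam))\<^sup>2)
      \<le> (\<Sum>k\<in>P. (?r k)\<^sup>2 + \<theta> * (2 * ?r k * Cmul d k) + \<theta>\<^sup>2 * (Cmul d k)\<^sup>2)"
    by (rule sum_mono)
  also have "\<dots> = (\<Sum>k\<in>P. (?r k)\<^sup>2) + \<theta> * (\<Sum>k\<in>P. 2 * ?r k * Cmul d k)
      + \<theta>\<^sup>2 * (\<Sum>k\<in>P. (Cmul d k)\<^sup>2)"
    by (simp add: sum.distrib sum_distrib_left)
  also have "(\<Sum>k\<in>P. 2 * ?r k * Cmul d k) = 2 * lam * eta * (\<Sum>k\<in>P. m_of lam a k * Cmul d k)"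
    using assms eta_pos by (simp add: sum_distrib_left m_of_def mult.assoc cong: sum.cong)
  also have "\<dots> = 2 * lam * eta * (\<Sum>q\<in>I. d q * CTmul (m_of lam a) q)"
    by (simp add: sum_mult_CTmul)
  finally have hinge: "(\<Sum>k\<in>P. (pos_part (Cmul (\<lambda>q. a q + \<theta> * d q) k - lam))\<^sup>2)
      \<le> (\<Sum>k\<in>P. (?r k)\<^sup>2) + \<theta> * (2 * lam * eta * (\<Sum>q\<in>I. d q * CTmul (m_of lam a) q))
        + \<theta>\<^sup>2 * (\<Sum>k\<in>P. (Cmul d k)\<^sup>2)" .
  have "0 \<le> 1 / (2 * lam * eta)"
    using assms eta_pos by simp
  from mult_left_mono[OF hinge this] assms eta_pos
  have hinge': "1 / (2 * lam * eta) * (\<Sum>k\<in>P. (pos_part (Cmul (\<lambda>q. a q + \<theta> * d q) k - lam))\<^sup>2)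
      \<le> 1 / (2 * lam * eta) * (\<Sum>k\<in>P. (?r k)\<^sup>2) + \<theta> * (\<Sum>q\<in>I. d q * CTmul (m_of lam a) q)
        + \<theta>\<^sup>2 * (1 / (2 * lam * eta) * (\<Sum>k\<in>P. (Cmul d k)\<^sup>2))"
    by (simp add: field_simps)
  have sq: "(\<Sum>q\<in>I. (a q + \<theta> * d q)\<^sup>2)
      = (\<Sum>q\<in>I. (a q)\<^sup>2) + \<theta> * (2 * (\<Sum>q\<in>I. a q * d q)) + \<theta>\<^sup>2 * (\<Sum>q\<in>I. (d q)\<^sup>2)"
    by (simp add: power2_sum power_mult_distrib sum.distrib sum_distrib_left algebra_simps)
  have lin: "(\<Sum>q\<in>I. t q * (a q + \<theta> * d q)) = (\<Sum>q\<in>I. t q * a q) + \<theta> * (\<Sum>q\<in>I. t q * d q)"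
    by (simp add: sum.distrib sum_distrib_left algebra_simps)
  have grad: "(\<Sum>q\<in>I. d q * dual_grad lam a q)
      = (\<Sum>q\<in>I. t q * d q) - 1/2 * (\<Sum>q\<in>I. a q * d q) - (\<Sum>q\<in>I. d q * CTmul (m_of lam a) q)"
    by (simp add: dual_grad_def sum.distrib sum_subtractf sum_distrib_left sum_divide_distrib algebra_simps)
  show ?thesis
    using hinge' unfolding dual_def grad sq lin by (simp add: algebra_simps)
qed

lemma primal_first_order:
  assumes "m \<in> nonneg_vecs P" "m' \<in> nonneg_vecs P"
    and opt: "\<And>m'. m' \<in> nonneg_vecs P \<Longrightarrow> primal lam m \<le> primal lam m'"
  shows "0 \<le> (\<Sum>k\<in>P. (m' k - m k) * primal_grad lam m k)"
proof (rule nonneg_of_perturbation[where M = "(\<Sum>q\<in>I. (CTmul (\<lambda>k. m' k - m k) q)\<^sup>2)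
    + lam * eta / 2 * (\<Sum>k\<in>P. (m' k - m k)\<^sup>2)"])
  fix \<theta> :: real
  assume "0 < \<theta>" "\<theta> \<le> 1"
  with assms have "primal lam m \<le> primal lam (\<lambda>k. m k + \<theta> * (m' k - m k))"
    by (simp add: nonneg_vecs_segment)
  with primal_perturb_le[of lam m \<theta> "\<lambda>k. m' k - m k"]
  show "0 \<le> \<theta> * (\<Sum>k\<in>P. (m' k - m k) * primal_grad lam m k)
    + \<theta>\<^sup>2 * ((\<Sum>q\<in>I. (CTmul (\<lambda>k. m' k - m k) q)\<^sup>2) + lam * eta / 2 * (\<Sum>k\<in>P. (m' k - m k)\<^sup>2))"
    by linarith
qed

lemma dual_first_order:
  assumes "0 < lam" "a \<in> nonneg_vecs I" "b \<in> nonneg_vecs I"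
    and opt: "\<And>b. b \<in> nonneg_vecs I \<Longrightarrow> dual lam b \<le> dual lam a"
  shows "(\<Sum>q\<in>I. (b q - a q) * dual_grad lam a q) \<le> 0"
proof -
  have "0 \<le> - (\<Sum>q\<in>I. (b q - a q) * dual_grad lam a q)"
  proof (rule nonneg_of_perturbation[where M = "1/4 * (\<Sum>q\<in>I. (b q - a q)\<^sup>2)
      + 1 / (2 * lam * eta) * (\<Sum>k\<in>P. (Cmul (\<lambda>q. b q - a q) k)\<^sup>2)"])
    fix \<theta> :: real
    assume "0 < \<theta>" "\<theta> \<le> 1"
    with assms have "dual lam (\<lambda>q. a q + \<theta> * (b q - a q)) \<le> dual lam a"
      by (simp add: nonneg_vecs_segment)
    with dual_perturb_ge[OF \<open>0 < lam\<close>, of a \<theta> "\<lambda>q. b q - a q"]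
    show "0 \<le> \<theta> * - (\<Sum>q\<in>I. (b q - a q) * dual_grad lam a q)
      + \<theta>\<^sup>2 * (1/4 * (\<Sum>q\<in>I. (b q - a q)\<^sup>2)
        + 1 / (2 * lam * eta) * (\<Sum>k\<in>P. (Cmul (\<lambda>q. b q - a q) k)\<^sup>2))"
      by linarith
  qed
  then show ?thesis by simp
qed

lemma primal_coord_zero_if_Cmul_le:
  assumes "0 < lam" "k \<in> P" "m \<in> nonneg_vecs P"
    and opt: "\<And>m'. m' \<in> nonneg_vecs P \<Longrightarrow> primal lam m \<le> primal lam m'"
    and small: "Cmul (alpha_of m) k \<le> lam"
  shows "m k = 0"
proof (rule ccontr)
  assume "m k \<noteq> 0"
  with assms have pos: "0 < m k"
    unfolding nonneg_vecs_def by force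
  have "m(k := 0) \<in> nonneg_vecs P"
    using \<open>m \<in> nonneg_vecs P\<close> unfolding nonneg_vecs_def by auto
  then have "0 \<le> (\<Sum>j\<in>P. ((m(k := 0)) j - m j) * primal_grad lam m j)"
    using primal_first_order \<open>m \<in> nonneg_vecs P\<close> opt by blast
  also have "\<dots> = (\<Sum>j\<in>P. if j = k then - m k * primal_grad lam m k else 0)"
    by (rule sum.cong) auto
  finally have "0 \<le> - m k * primal_grad lam m k"
    using \<open>k \<in> P\<close> finite_P by simp
  moreover have "0 < lam * eta * m k"
    using pos \<open>0 < lam\<close> eta_pos by simp
  then have "0 < primal_grad lam m k"
    using small by (simp add: primal_grad_def)
  ultimately show False
    using pos by (simp add: mult_le_0_iff)
qed

lemma alpha_of_nonneg_vecs: "(\<lambda>q. alpha_of m q / s) \<in> nonneg_vecs I" if "0 < s"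
  using that by (simp add: nonneg_vecs_def alpha_of_def pos_part_def)

lemma m_of_nonneg_vecs: "m_of lam a \<in> nonneg_vecs P" if "0 < lam"
  using that eta_pos by (simp add: nonneg_vecs_def m_of_def pos_part_def)

(* Up to the factor lam / lam0, m_of lam0 A satisfies the primal optimality condition at lam
  with C alpha replaced by C A. *)
lemma m_of_first_order:
  assumes "0 < lam" "0 < lam0" "m \<in> nonneg_vecs P"
  shows "0 \<le> (\<Sum>k\<in>P. (m k - m_of lam0 A k) * (lam + lam * eta * m_of lam0 A k - lam / lam0 * Cmul A k))"
proof (rule sum_nonneg)
  fix k
  assume "k \<in> P"
  show "0 \<le> (m k - m_of lam0 A k) * (lam + lam * eta * m_of lam0 A k - lam / lam0 * Cmul A k)"
  proof (cases "lam0 \<le> Cmul A k")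
    case True
    with \<open>k \<in> P\<close> assms(2) eta_pos have "lam + lam * eta * m_of lam0 A k - lam / lam0 * Cmul A k = 0"
      by (simp add: m_of_def pos_part_def field_simps)
    then show ?thesis by simp
  next
    case False
    with \<open>k \<in> P\<close> have "m_of lam0 A k = 0"
      by (simp add: m_of_def pos_part_def)
    moreover from False have "lam / lam0 * Cmul A k \<le> lam"
      using assms(1,2) by (simp add: field_simps)
    moreover have "0 \<le> m k"
      using assms(3) \<open>k \<in> P\<close> by (simp add: nonneg_vecs_def)
    ultimately show ?thesis by simp
  qed
qed

lemma alpha_of_complementary:
  assumes "0 \<le> c" "A \<in> nonneg_vecs I"
  shows "0 \<le> (\<Sum>q\<in>I. (alpha_of m q - c * A q) * (t q - CTmul m q - alpha_of m q / 2))"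
proof (rule sum_nonneg)
  fix q
  assume "q \<in> I"
  show "0 \<le> (alpha_of m q - c * A q) * (t q - CTmul m q - alpha_of m q / 2)"
  proof (cases "0 \<le> t q - CTmul m q")
    case True
    with \<open>q \<in> I\<close> have "t q - CTmul m q - alpha_of m q / 2 = 0"
      by (simp add: alpha_of_def pos_part_def)
    then show ?thesis by (metis mult_zero_right order_refl)
  next
    case False
    have "0 \<le> c * A q"
      using assms \<open>q \<in> I\<close> by (simp add: nonneg_vecs_def)
    with False \<open>q \<in> I\<close> show ?thesis
      by (simp add: alpha_of_def pos_part_def mult_nonneg_nonpos)
  qed
qed

lemma alpha_of_cross_m_of_nonpos:
  assumes "0 < lam" "lam \<le> lam0"
    and m: "m \<in> nonneg_vecs P" "\<And>m'. m' \<in> nonneg_vecs P \<Longrightarrow> primal lam m \<le> primal lam m'"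
  shows "(\<Sum>q\<in>I. (alpha_of m q - lam / lam0 * A q) * (CTmul (m_of lam0 A) q - CTmul m q)) \<le> 0"
proof -
  define s where "s = lam / lam0"
  define m0 where "m0 = m_of lam0 A"
  define u where "u q = alpha_of m q - s * A q" for q
  have "0 < lam0"
    using assms by linarith
  have primal_opt: "0 \<le> (\<Sum>k\<in>P. (m0 k - m k) * primal_grad lam m k)"
    using primal_first_order[OF m(1) m_of_nonneg_vecs[OF \<open>0 < lam0\<close>] m(2)] by (simp add: m0_def)
  have Cu: "Cmul u k = Cmul (alpha_of m) k - s * Cmul A k" for k
    by (simp add: u_def sum_subtractf sum_distrib_left algebra_simps)
  have "(m0 k - m k) * Cmul u k = - ((m0 k - m k) * primal_grad lam m k)
      - (m k - m0 k) * (lam + lam * eta * m0 k - s * Cmul A k) - lam * eta * (m0 k - m k)\<^sup>2" for k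
    unfolding primal_grad_def Cu by (simp add: power2_eq_square algebra_simps)
  then have "(\<Sum>k\<in>P. (m0 k - m k) * Cmul u k)
      = - (\<Sum>k\<in>P. (m0 k - m k) * primal_grad lam m k)
        - (\<Sum>k\<in>P. (m k - m0 k) * (lam + lam * eta * m0 k - s * Cmul A k))
        - lam * eta * (\<Sum>k\<in>P. (m0 k - m k)\<^sup>2)"
    by (simp add: sum_subtractf sum_negf sum_distrib_left)
  moreover have "0 \<le> lam * eta * (\<Sum>k\<in>P. (m0 k - m k)\<^sup>2)"
    using assms eta_pos by (simp add: sum_nonneg)
  ultimately have "(\<Sum>k\<in>P. (m0 k - m k) * Cmul u k) \<le> 0"
    using primal_opt m_of_first_order[OF \<open>0 < lam\<close> \<open>0 < lam0\<close> m(1), of A]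
    unfolding m0_def s_def by linarith
  also have "(\<Sum>k\<in>P. (m0 k - m k) * Cmul u k) = (\<Sum>q\<in>I. u q * (CTmul m0 q - CTmul m q))"
    by (simp add: sum_mult_CTmul[symmetric] left_diff_distrib right_diff_distrib sum_subtractf)
  finally show ?thesis
    by (simp add: u_def m0_def s_def)
qed

lemma sum_alpha_of_diff_nonpos:
  assumes lam: "0 < lam" "lam \<le> lam0"
    and m: "m \<in> nonneg_vecs P" "\<And>m'. m' \<in> nonneg_vecs P \<Longrightarrow> primal lam m \<le> primal lam m'"
    and A: "A \<in> nonneg_vecs I" "\<And>b. b \<in> nonneg_vecs I \<Longrightarrow> dual lam0 b \<le> dual lam0 A"
  shows "(\<Sum>q\<in>I. (alpha_of m q - lam / lam0 * A q) * (alpha_of m q - A q)) \<le> 0"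
proof -
  define s where "s = lam / lam0"
  define u where "u q = alpha_of m q - s * A q" for q
  have "0 < s" "0 < lam0"
    using lam by (auto simp: s_def)
  have "(\<Sum>q\<in>I. (alpha_of m q / s - A q) * dual_grad lam0 A q) \<le> 0"
    using dual_first_order[OF \<open>0 < lam0\<close> A(1) alpha_of_nonneg_vecs[OF \<open>0 < s\<close>] A(2)] .
  from mult_left_mono[OF this, of s] \<open>0 < s\<close>
  have "(\<Sum>q\<in>I. u q * dual_grad lam0 A q) \<le> 0"
    by (simp add: u_def sum_distrib_left algebra_simps)
  moreover have "(\<Sum>q\<in>I. u q * (CTmul (m_of lam0 A) q - CTmul m q)) \<le> 0"
    using alpha_of_cross_m_of_nonpos[OF lam m] by (simp add: u_def s_def)
  moreover have "0 \<le> (\<Sum>q\<in>I. u q * (t q - CTmul m q - alpha_of m q / 2))"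
    using alpha_of_complementary[OF less_imp_le[OF \<open>0 < s\<close>] A(1)] by (simp add: u_def)
  moreover have "(\<Sum>q\<in>I. u q * (alpha_of m q - A q)) = 2 * ((\<Sum>q\<in>I. u q * dual_grad lam0 A q)
      + (\<Sum>q\<in>I. u q * (CTmul (m_of lam0 A) q - CTmul m q))
      - (\<Sum>q\<in>I. u q * (t q - CTmul m q - alpha_of m q / 2)))"
    by (simp add: dual_grad_def sum_subtractf[symmetric] sum.distrib[symmetric] sum_distrib_left
        algebra_simps)
  ultimately show ?thesis
    by (simp add: u_def s_def)
qed

lemma dual_ball:
  assumes "0 < lam" "lam \<le> lam0"
    and "m \<in> nonneg_vecs P" "\<And>m'. m' \<in> nonneg_vecs P \<Longrightarrow> primal lam m \<le> primal lam m'"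
    and "A \<in> nonneg_vecs I" "\<And>b. b \<in> nonneg_vecs I \<Longrightarrow> dual lam0 b \<le> dual lam0 A"
  shows "L2_set (\<lambda>q. alpha_of m q - (1 + lam / lam0) / 2 * A q) I \<le> (1 - lam / lam0) / 2 * L2_set A I"
proof -
  let ?s = "lam / lam0"
  have "(\<Sum>q\<in>I. (alpha_of m q - (1 + ?s) / 2 * A q)\<^sup>2)
      = (\<Sum>q\<in>I. (alpha_of m q - ?s * A q) * (alpha_of m q - A q)) + ((1 - ?s) / 2)\<^sup>2 * (\<Sum>q\<in>I. (A q)\<^sup>2)"
  proof -
    have "(x - (1 + s) / 2 * y)\<^sup>2 = (x - s * y) * (x - y) + ((1 - s) / 2)\<^sup>2 * y\<^sup>2" for x y s :: real
      by (simp add: power2_eq_square field_simps)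
    then show ?thesis
      by (simp add: sum.distrib sum_distrib_left)
  qed
  also have "\<dots> \<le> ((1 - ?s) / 2)\<^sup>2 * (\<Sum>q\<in>I. (A q)\<^sup>2)"
    using sum_alpha_of_diff_nonpos[OF assms] by simp
  finally have "L2_set (\<lambda>q. alpha_of m q - (1 + ?s) / 2 * A q) I \<le> sqrt (((1 - ?s) / 2)\<^sup>2 * (\<Sum>q\<in>I. (A q)\<^sup>2))"
    unfolding L2_set_def by (rule real_sqrt_le_mono)
  also have "\<dots> = (1 - ?s) / 2 * L2_set A I"
    using assms by (simp add: L2_set_def real_sqrt_mult)
  finally show ?thesis .
qed

theorem safe_screening:
  assumes "0 < lam" "lam \<le> lam0"
    and "m \<in> nonneg_vecs P" "\<And>m'. m' \<in> nonneg_vecs P \<Longrightarrow> primal lam m \<le> primal lam m'"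
    and "A \<in> nonneg_vecs I" "\<And>b. b \<in> nonneg_vecs I \<Longrightarrow> dual lam0 b \<le> dual lam0 A"
    and "L2_set (\<lambda>q. a0 q - A q) I \<le> eps" "k \<in> P"
    and "lam0 * (2 * eps * L2_set (C k) I + L2_set a0 I * L2_set (C k) I + Cmul a0 k)
        / (2 * lam0 + L2_set a0 I * L2_set (C k) I - Cmul a0 k) \<le> lam"
  shows "m k = 0"
proof (rule primal_coord_zero_if_Cmul_le)
  have "0 \<le> (1 + lam / lam0) / 2" "0 \<le> (1 - lam / lam0) / 2"
    using assms(1,2) by auto
  from sum_mult_le_of_ball[OF dual_ball[OF assms(1-6)] assms(7) this]
  have "Cmul (alpha_of m) k \<le> (1 + lam / lam0) / 2 * (Cmul a0 k + L2_set (C k) I * eps)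
      + (1 - lam / lam0) / 2 * L2_set (C k) I * (L2_set a0 I + eps)" .
  also have "\<dots> \<le> lam"
    using assms(1,2,9) sum_mult_le_L2_set[of "C k" a0 I]
    by (intro screening_threshold) (auto simp: mult.commute)
  finally show "Cmul (alpha_of m) k \<le> lam" .
qed (use assms in auto)

end

lemma pair_idx_eq_image:
  "pair_idx n Dm Sm = (\<lambda>(i, l). (True, i, l)) ` (SIGMA i:{1..n}. Dm i)
      \<union> (\<lambda>(i, j). (False, i, j)) ` (SIGMA i:{1..n}. Sm i)"
  unfolding pair_idx_def by auto

lemma sum_pair_idx:
  assumes "\<forall>i\<in>{1..n}. finite (Dm i) \<and> finite (Sm i)"
  shows "(\<Sum>q\<in>pair_idx n Dm Sm. g q)
    = (\<Sum>i\<in>{1..n}. (\<Sum>l\<in>Dm i. g (True, i, l)) + (\<Sum>j\<in>Sm i. g (False, i, j)))"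
proof -
  have fin: "finite (SIGMA i:{1..n}. Dm i)" "finite (SIGMA i:{1..n}. Sm i)"
    by (rule finite_SigmaI; use assms in simp)+
  have "(\<Sum>q\<in>pair_idx n Dm Sm. g q)
      = (\<Sum>q\<in>(\<lambda>(i, l). (True, i, l)) ` (SIGMA i:{1..n}. Dm i). g q)
        + (\<Sum>q\<in>(\<lambda>(i, j). (False, i, j)) ` (SIGMA i:{1..n}. Sm i). g q)"
    unfolding pair_idx_eq_image by (rule sum.union_disjoint) (use fin in auto)
  also have "\<dots> = (\<Sum>(i, l)\<in>(SIGMA i:{1..n}. Dm i). g (True, i, l))
      + (\<Sum>(i, j)\<in>(SIGMA i:{1..n}. Sm i). g (False, i, j))"
    by (simp add: sum.reindex inj_on_def case_prod_unfold)
  also have "\<dots> = (\<Sum>i\<in>{1..n}. \<Sum>l\<in>Dm i. g (True, i, l)) + (\<Sum>i\<in>{1..n}. \<Sum>j\<in>Sm i. g (False, i, j))"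
    using assms by (simp add: sum.Sigma)
  finally show ?thesis
    by (simp add: sum.distrib)
qed

lemma sparse_metric_learning_atLeastAtMost:
  fixes p :: nat
  assumes "0 < eta"
  shows "sparse_metric_learning {1..p} eta"
  using assms by unfold_locales auto

lemma primal_obj_eq:
  fixes n p :: nat
  assumes "\<forall>i\<in>{1..n}. finite (Dm i) \<and> finite (Sm i)" "0 < eta"
  shows "primal_obj n p x Dm Sm L U eta lam m
    = sparse_metric_learning.primal (pair_idx n Dm Sm) {1..p} (Cmat x) (tvec L U) eta lam m"
  unfolding primal_obj_def sparse_metric_learning.primal_def[OF sparse_metric_learning_atLeastAtMost[OF assms(2)]]
    sum_pair_idx[OF assms(1)]
  by (simp add: sq_hinge_def Cmat_def tvec_def sum_negf)

lemma dual_obj_eq: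
  fixes n p :: nat
  assumes "0 < eta" "0 < lam"
  shows "dual_obj n p x Dm Sm L U eta lam a
    = sparse_metric_learning.dual (pair_idx n Dm Sm) {1..p} (Cmat x) (tvec L U) eta lam a"
proof -
  have scale: "lam * eta / 2 * (\<Sum>k\<in>K. (1 / (lam * eta) * f k)\<^sup>2) = 1 / (2 * lam * eta) * (\<Sum>k\<in>K. (f k)\<^sup>2)"
    for K and f :: "nat \<Rightarrow> real"
    using assms by (simp add: power_mult_distrib power2_eq_square flip: sum_divide_distrib)
  show ?thesis
    unfolding dual_obj_def Let_def scale
      sparse_metric_learning.dual_def[OF sparse_metric_learning_atLeastAtMost[OF assms(1)]] ..
qed

lemma primal_feasible_iff: "primal_feasible p m \<longleftrightarrow> m \<in> nonneg_vecs {1..p}"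
  by (auto simp: primal_feasible_def nonneg_vecs_def)

lemma dual_feasible_iff: "dual_feasible n Dm Sm a \<longleftrightarrow> a \<in> nonneg_vecs (pair_idx n Dm Sm)"
  by (auto simp: dual_feasible_def nonneg_vecs_def)

lemma vnorm_eq_L2_set: "vnorm A f = L2_set f A"
  by (simp add: vnorm_def L2_set_def)

theorem theorem6:
  fixes n K p :: nat
    and x :: "nat \<Rightarrow> nat \<Rightarrow> real"
    and Dm Sm :: "nat \<Rightarrow> nat set"
    and L U eta lam lam0 eps :: real
    and a0star a0 :: "bool \<times> nat \<times> nat \<Rightarrow> real"
    and mstar :: "nat \<Rightarrow> real"
    and k :: nat
  assumes "n \<ge> 1" and "K \<ge> 1" and "p \<ge> 1"
    and "\<And>i k. i \<in> {1..n} \<Longrightarrow> k \<in> {1..p} \<Longrightarrow> x i k \<ge> 0"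
    and "\<And>i. i \<in> {1..n} \<Longrightarrow> Dm i \<subseteq> {1..n} \<and> card (Dm i) = K"
    and "\<And>i. i \<in> {1..n} \<Longrightarrow> Sm i \<subseteq> {1..n} \<and> card (Sm i) = K"
    and "L \<ge> U" and "U \<ge> 0" and "eta > 0"
    and "0 < lam" and "lam \<le> lam0"
    and "dual_feasible n Dm Sm a0star"
    and "\<And>a. dual_feasible n Dm Sm a \<Longrightarrow>
            dual_obj n p x Dm Sm L U eta lam0 a \<le> dual_obj n p x Dm Sm L U eta lam0 a0star"
    and "eps \<ge> 0"
    and "vnorm (pair_idx n Dm Sm) (\<lambda>q. a0 q - a0star q) \<le> eps"
    and "primal_feasible p mstar"
    and "\<And>m. primal_feasible p m \<Longrightarrow>
            primal_obj n p x Dm Sm L U eta lam mstar \<le> primal_obj n p x Dm Sm L U eta lam m"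
    and "k \<in> {1..p}"
    and "lam0 * (2 * eps * vnorm (pair_idx n Dm Sm) (Cmat x k)
                 + vnorm (pair_idx n Dm Sm) a0 * vnorm (pair_idx n Dm Sm) (Cmat x k)
                 + (\<Sum>q\<in>pair_idx n Dm Sm. Cmat x k q * a0 q))
          / (2 * lam0 + vnorm (pair_idx n Dm Sm) a0 * vnorm (pair_idx n Dm Sm) (Cmat x k)
                 - (\<Sum>q\<in>pair_idx n Dm Sm. Cmat x k q * a0 q)) \<le> lam"
  shows "mstar k = 0"
proof -
  have fin: "\<forall>i\<in>{1..n}. finite (Dm i) \<and> finite (Sm i)"
    using assms(5,6) by (meson finite_atLeastAtMost finite_subset)
  interpret sparse_metric_learning "pair_idx n Dm Sm" "{1..p}" "Cmat x" "tvec L U" eta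
    using sparse_metric_learning_atLeastAtMost[OF \<open>eta > 0\<close>] .
  show ?thesis
  proof (rule safe_screening)
    show "m' \<in> nonneg_vecs {1..p} \<Longrightarrow> primal lam mstar \<le> primal lam m'" for m'
      using assms(17) by (simp add: primal_feasible_iff primal_obj_eq[OF fin \<open>eta > 0\<close>])
    show "b \<in> nonneg_vecs (pair_idx n Dm Sm) \<Longrightarrow> dual lam0 b \<le> dual lam0 a0star" for b
      using assms(13) dual_obj_eq[OF \<open>eta > 0\<close>] assms(10,11)
      by (simp add: dual_feasible_iff)
  qed (use assms in \<open>simp_all add: primal_feasible_iff dual_feasible_iff vnorm_eq_L2_set\<close>)
qed

end
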